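(* Consider the partial-block protocol without direct messaging described in the context, on a finite set of agents $A$ with a connected undirected connectivity graph $G=(A,E)$, and suppose the block length is $L=\Delta(G)+1$, where $\Delta(G)$ is the maximum degree of $G$. Then a deadlock never occurs: for every epoch $t$ it is not the case that $D(i)$ holds for all $i\in A$.
   Context: Let $A$ be a finite set of agents (agent IDs) and $G=(A,E)$ a connected undirected graph; $\Gamma_i$ denotes the set of neighbors of $i$ and $\Delta(G)$ the maximum vertex degree. Fix an integer $L\ge 1$ (block length). Each agent $i$ maintains a partial block $pb_i\subseteq A$ (a set of agent IDs). The system runs in epochs $t=0,1,2,\dots$; $pb_i^{(t)}$ is agent $i$'s partial block at the start of epoch $t$. In each epoch: (C1) every agent $i$ with $i\notin pb_i$ adds $i$ to $pb_i$; (C2) every agent $i$ sends its $pb_i$ to every neighbor $j\in\Gamma_i$. When an agent $i$ receives a partial block $P$ from a neighbor it applies the rule: if $|P\setminus\{i\}|>|pb_i\setminus\{i\}|$, agent $i$ sets $pb_i:=P$; otherwise the received block is discarded (in particular, there is no direct messaging to non-neighbors). All received partial blocks are assumed to pass all validity and similarity checks. For an agent $i$ and epoch $t$, the predicate $D(i)$ means: $pb_i^{(t)}=pb_i^{(t+1)}$ and $|pb_i^{(t)}|<L$. A deadlock at epoch $t$ means that $D(i)$ holds for all $i\in A$. *)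

theory Defs
  imports Main
begin

definition neighbors :: "('a \<Rightarrow> 'a \<Rightarrow> bool) \<Rightarrow> 'a \<Rightarrow> 'a set" where
  "neighbors E i = {j. E i j}"

definition max_degree :: "'a set \<Rightarrow> ('a \<Rightarrow> 'a \<Rightarrow> bool) \<Rightarrow> nat" where
  "max_degree A E = Max ((\<lambda>i. card (neighbors E i)) ` A)"

definition connected_undirected_graph :: "'a set \<Rightarrow> ('a \<Rightarrow> 'a \<Rightarrow> bool) \<Rightarrow> bool" where
  "connected_undirected_graph A E \<longleftrightarrow>
     finite A \<and> A \<noteq> {} \<and>
     (\<forall>i j. E i j \<longrightarrow> i \<in> A \<and> j \<in> A) \<and>
     (\<forall>i j. E i j \<longrightarrow> E j i) \<and>
     (\<forall>i. \<not> E i i) \<and>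
     (\<forall>i\<in>A. \<forall>j\<in>A. (i, j) \<in> {(x, y). E x y}\<^sup>*)"

definition recv :: "'a \<Rightarrow> 'a set \<Rightarrow> 'a set \<Rightarrow> 'a set" where
  "recv i P cur = (if card (cur - {i}) < card (P - {i}) then P else cur)"

(* One epoch: (C1) every agent adds itself; (C2) every agent sends its block
   (after C1) to all neighbours; each agent processes the received blocks one
   by one, in some arbitrary order of its neighbours. *)
definition epoch_step :: "'a set \<Rightarrow> ('a \<Rightarrow> 'a \<Rightarrow> bool) \<Rightarrow> ('a \<Rightarrow> 'a set) \<Rightarrow> ('a \<Rightarrow> 'a set) \<Rightarrow> bool" where
  "epoch_step A E s s' \<longleftrightarrow>
     (\<forall>i\<in>A. \<exists>xs. distinct xs \<and> set xs = neighbors E i \<and>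
        s' i = fold (\<lambda>j cur. recv i (insert j (s j)) cur) xs (insert i (s i)))"

definition execution :: "'a set \<Rightarrow> ('a \<Rightarrow> 'a \<Rightarrow> bool) \<Rightarrow> (nat \<Rightarrow> 'a \<Rightarrow> 'a set) \<Rightarrow> bool" where
  "execution A E pb \<longleftrightarrow> (\<forall>i\<in>A. pb 0 i = {}) \<and> (\<forall>t. epoch_step A E (pb t) (pb (Suc t)))"

definition D :: "nat \<Rightarrow> (nat \<Rightarrow> 'a \<Rightarrow> 'a set) \<Rightarrow> nat \<Rightarrow> 'a \<Rightarrow> bool" where
  "D L pb t i \<longleftrightarrow> pb t i = pb (Suc t) i \<and> card (pb t i) < L"

definition deadlock :: "'a set \<Rightarrow> nat \<Rightarrow> (nat \<Rightarrow> 'a \<Rightarrow> 'a set) \<Rightarrow> nat \<Rightarrow> bool" where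
  "deadlock A L pb t \<longleftrightarrow> (\<forall>i\<in>A. D L pb t i)"

end

theory Submission
  imports Defs
begin

text \<open>In a deadlock every agent's block is left unchanged by an epoch. An agent whose block
  survives its own epoch already contains itself and is at least as large (ignoring itself) as
  every block it receives. If agent \<open>i\<close> missed a neighbour \<open>j\<close>, comparing the two blocks in
  both directions would make \<open>|pb\<^sub>j| - 1 \<le> |pb\<^sub>i| - 1 \<le> |pb\<^sub>j| - 2\<close>. Hence every block
  contains the closed neighbourhood of its agent, and an agent of maximum degree holds a block
  of size at least \<open>\<Delta>(G) + 1 = L\<close>, contradicting \<open>D\<close>.\<close>

lemma fold_recv_in:
  "fold (\<lambda>j. recv i (f j)) xs c \<in> insert c (f ` set xs)"
  by (induction xs arbitrary: c) (auto simp: recv_def)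

lemma card_fold_recv_ge_start:
  "card (c - {i}) \<le> card (fold (\<lambda>j. recv i (f j)) xs c - {i})"
  by (induction xs arbitrary: c) (auto simp: recv_def intro: le_trans less_imp_le)

lemma card_fold_recv_ge_received:
  "j \<in> set xs \<Longrightarrow> card (f j - {i}) \<le> card (fold (\<lambda>j. recv i (f j)) xs c - {i})"
proof (induction xs arbitrary: c)
  case (Cons x xs)
  show ?case
  proof (cases "j = x")
    case True
    then have "card (f j - {i}) \<le> card (recv i (f x) c - {i})"
      by (simp add: recv_def)
    also have "\<dots> \<le> card (fold (\<lambda>j. recv i (f j)) xs (recv i (f x) c) - {i})"
      by (rule card_fold_recv_ge_start)
    finally show ?thesis by simp
  next
    case False
    with Cons show ?thesis by simp
  qed
qed simp

lemma fold_recv_eq_start: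
  "card (fold (\<lambda>j. recv i (f j)) xs c - {i}) \<le> card (c - {i})
   \<Longrightarrow> fold (\<lambda>j. recv i (f j)) xs c = c"
proof (induction xs arbitrary: c)
  case (Cons x xs)
  show ?case
  proof (cases "card (c - {i}) < card (f x - {i})")
    case True
    then have "recv i (f x) c = f x" by (simp add: recv_def)
    moreover have "card (f x - {i}) \<le> card (fold (\<lambda>j. recv i (f j)) xs (f x) - {i})"
      by (rule card_fold_recv_ge_start)
    ultimately show ?thesis using Cons.prems True by simp
  next
    case False
    then have "recv i (f x) c = c" by (simp add: recv_def)
    with Cons show ?thesis by simp
  qed
qed simp

lemma fold_recv_fixpoint:
  assumes fixpoint: "fold (\<lambda>j. recv i (f j)) xs (insert i c) = c"
  shows "i \<in> c"
    and "j \<in> set xs \<Longrightarrow> card (f j - {i}) \<le> card (c - {i})"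
proof -
  have "fold (\<lambda>j. recv i (f j)) xs (insert i c) = insert i c"
    by (rule fold_recv_eq_start) (simp add: fixpoint)
  with fixpoint show "i \<in> c" by (metis insertI1)
  show "j \<in> set xs \<Longrightarrow> card (f j - {i}) \<le> card (c - {i})"
    using card_fold_recv_ge_received[of j xs f i "insert i c"] by (simp add: fixpoint)
qed

lemma epoch_step_stable_agent:
  assumes "epoch_step A E s s'" "i \<in> A" "s' i = s i"
  shows epoch_step_stable_self: "i \<in> s i"
    and epoch_step_stable_ge: "E i j \<Longrightarrow> card (insert j (s j) - {i}) \<le> card (s i - {i})"
proof -
  obtain xs where "set xs = neighbors E i"
    and fixpoint: "s i = fold (\<lambda>j. recv i (insert j (s j))) xs (insert i (s i))"
    using assms unfolding epoch_step_def by metis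
  then show "i \<in> s i" "E i j \<Longrightarrow> card (insert j (s j) - {i}) \<le> card (s i - {i})"
    using fold_recv_fixpoint[OF fixpoint[symmetric]] by (auto simp: neighbors_def)
qed

lemma mem_if_mutual_card_bound:
  assumes "finite P" "finite Q" "i \<in> P" "j \<in> Q"
    and "card (insert j Q - {i}) \<le> card (P - {i})"
    and "card (insert i P - {j}) \<le> card (Q - {j})"
  shows "j \<in> P"
proof (rule ccontr)
  assume "j \<notin> P"
  with assms have "card (Q - {i}) \<le> card P - 1" and "card P \<le> card Q - 1"
    by (simp_all add: insert_absorb)
  moreover have "card Q - 1 \<le> card (Q - {i})"
    by (simp add: card_Diff_singleton_if)
  moreover have "card P > 0" "card Q > 0"
    using assms card_gt_0_iff by blast+
  ultimately show False by linarith
qed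

lemma execution_block_subset:
  assumes "execution A E pb" and closed: "\<And>i j. E i j \<Longrightarrow> j \<in> A" and "i \<in> A"
  shows "pb t i \<subseteq> A"
  using \<open>i \<in> A\<close>
proof (induction t arbitrary: i)
  case 0
  with assms(1) show ?case by (simp add: execution_def)
next
  case (Suc t)
  from assms(1) Suc.prems obtain xs where "set xs = neighbors E i"
    and step: "pb (Suc t) i = fold (\<lambda>j. recv i (insert j (pb t j))) xs (insert i (pb t i))"
    unfolding execution_def epoch_step_def by metis
  then have "\<And>j. j \<in> set xs \<Longrightarrow> insert j (pb t j) \<subseteq> A"
    using Suc.IH closed by (auto simp: neighbors_def)
  moreover have "insert i (pb t i) \<subseteq> A"
    using Suc by blast
  ultimately show ?case
    using fold_recv_in[of i "\<lambda>j. insert j (pb t j)" xs] unfolding step by blast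
qed

lemma stable_block_contains_closed_neighborhood:
  assumes "execution A E pb" "finite A"
    and closed: "\<And>i j. E i j \<Longrightarrow> j \<in> A" and sym: "\<And>i j. E i j \<Longrightarrow> E j i"
    and stable: "\<And>i. i \<in> A \<Longrightarrow> pb (Suc t) i = pb t i"
    and "i \<in> A"
  shows "insert i (neighbors E i) \<subseteq> pb t i"
proof -
  have step: "epoch_step A E (pb t) (pb (Suc t))"
    using assms(1) by (simp add: execution_def)
  have finite: "finite (pb t k)" if "k \<in> A" for k
    using execution_block_subset[OF assms(1) closed that] \<open>finite A\<close> by (rule finite_subset)
  have self: "k \<in> pb t k" if "k \<in> A" for k
    using epoch_step_stable_self[OF step that stable[OF that]] .
  have ge: "card (insert l (pb t l) - {k}) \<le> card (pb t k - {k})" if "k \<in> A" "E k l" for k l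
    using epoch_step_stable_ge[OF step that(1) stable[OF that(1)] that(2)] .
  have "j \<in> pb t i" if "E i j" for j
  proof -
    have "j \<in> A" using closed that .
    show ?thesis
      using mem_if_mutual_card_bound[OF finite finite self self ge ge]
        \<open>i \<in> A\<close> \<open>j \<in> A\<close> that sym[OF that] by blast
  qed
  then show ?thesis
    using self \<open>i \<in> A\<close> by (auto simp: neighbors_def)
qed

theorem theorem2:
  fixes A :: "'a set" and E :: "'a \<Rightarrow> 'a \<Rightarrow> bool" and pb :: "nat \<Rightarrow> 'a \<Rightarrow> 'a set" and L :: nat
  assumes "connected_undirected_graph A E"
    and "L = max_degree A E + 1"
    and "execution A E pb"
  shows "\<forall>t. \<not> deadlock A L pb t"
proof (intro allI notI)
  fix t assume "deadlock A L pb t"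
  then have stable: "\<And>i. i \<in> A \<Longrightarrow> pb (Suc t) i = pb t i"
    and small: "\<And>i. i \<in> A \<Longrightarrow> card (pb t i) < L"
    by (auto simp: deadlock_def D_def)
  from assms(1) have "finite A" "A \<noteq> {}" and closed: "\<And>i j. E i j \<Longrightarrow> j \<in> A"
    and sym: "\<And>i j. E i j \<Longrightarrow> E j i" and irrefl: "\<And>i. \<not> E i i"
    by (auto simp: connected_undirected_graph_def)
  have "max_degree A E \<in> (\<lambda>i. card (neighbors E i)) ` A"
    unfolding max_degree_def using \<open>finite A\<close> \<open>A \<noteq> {}\<close> by (intro Max_in) auto
  then obtain i where "i \<in> A" and deg: "max_degree A E = card (neighbors E i)"
    by blast
  have "finite (neighbors E i)"
    using closed \<open>finite A\<close> by (auto simp: neighbors_def intro: finite_subset)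
  then have "L = card (insert i (neighbors E i))"
    using assms(2) deg irrefl by (simp add: neighbors_def)
  also have "\<dots> \<le> card (pb t i)"
    using stable_block_contains_closed_neighborhood[OF assms(3) \<open>finite A\<close> closed sym stable
        \<open>i \<in> A\<close>] execution_block_subset[OF assms(3) closed \<open>i \<in> A\<close>] \<open>finite A\<close>
    by (meson card_mono finite_subset)
  finally show False using small[OF \<open>i \<in> A\<close>] by simp
qed

end
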